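(* There exists $\varepsilon_0>0$ such that for every $\varepsilon\in(0,\varepsilon_0)$ the following holds. Let $\mathbf{U}$ be the $7\times 7$ matrix $$\mathbf{U}=\begin{pmatrix} 0 & -1 & \varepsilon & -10 & -\tfrac13+\varepsilon & -\tfrac13+\varepsilon & -\tfrac13+\varepsilon\\ \varepsilon & 0 & -1 & -10 & -\tfrac13+\varepsilon & -\tfrac13+\varepsilon & -\tfrac13+\varepsilon\\ -1 & \varepsilon & 0 & -10 & -\tfrac13+\varepsilon & -\tfrac13+\varepsilon & -\tfrac13+\varepsilon\\ -2 & -2 & 2 & 0 & -\tfrac13 & -\tfrac13 & -\tfrac13\\ -\tfrac13 & -\tfrac13 & -\tfrac13 & 10 & 0 & -1 & \varepsilon\\ -\tfrac13 & -\tfrac13 & -\tfrac13 & 10 & \varepsilon & 0 & -1\\ -\tfrac13 & -\tfrac13 & -\tfrac13 & 10 & -1 & \varepsilon & 0 \end{pmatrix},$$ and let $(\mathbf{x},\mathbf{y})$ be a Nash equilibrium of the symmetric game with payoff matrix $\mathbf{U}$. If $x_1+x_2+x_3>0$ and $y_1+y_2+y_3>0$, then $x_1=x_2=x_3$ and $y_1=y_2=y_3$. If $x_5+x_6+x_7>0$ and $y_5+y_6+y_7>0$, then $x_5=x_6=x_7$ and $y_5=y_6=y_7$.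
   Context: Mixed strategies are elements of $S_7=\{\mathbf{x}\in\mathbb{R}_+^7:\sum_i x_i=1\}$; for the profile $(\mathbf{x},\mathbf{y})$ the row player gets $\mathbf{x}\cdot\mathbf{U}\mathbf{y}$ and the column player gets $\mathbf{y}\cdot\mathbf{U}\mathbf{x}$. The paper assumes throughout that $\varepsilon>0$ is "small enough". *)

theory Defs
  imports Complex_Main
begin

text \<open>Strategies and matrices indexed by {1..7}; a strategy is a function nat => real,
  only its values on {1..7} matter.\<close>

definition simplex7 :: "(nat \<Rightarrow> real) set" where
  "simplex7 = {x. (\<forall>i\<in>{1..7}. 0 \<le> x i) \<and> (\<Sum>i=1..7. x i) = 1}"

definition payoff :: "(nat \<Rightarrow> nat \<Rightarrow> real) \<Rightarrow> (nat \<Rightarrow> real) \<Rightarrow> (nat \<Rightarrow> real) \<Rightarrow> real" where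
  "payoff U x y = (\<Sum>i=1..7. \<Sum>j=1..7. x i * U i j * y j)"

definition nash_eq :: "(nat \<Rightarrow> nat \<Rightarrow> real) \<Rightarrow> (nat \<Rightarrow> real) \<Rightarrow> (nat \<Rightarrow> real) \<Rightarrow> bool" where
  "nash_eq U x y \<longleftrightarrow> x \<in> simplex7 \<and> y \<in> simplex7 \<and>
     (\<forall>x'\<in>simplex7. payoff U x' y \<le> payoff U x y) \<and>
     (\<forall>y'\<in>simplex7. payoff U y' x \<le> payoff U y x)"

definition Umat :: "real \<Rightarrow> nat \<Rightarrow> nat \<Rightarrow> real" where
  "Umat e i j =
    (let a = -1/3 + e; t = -1/3 in
     [[0, -1, e, -10, a, a, a],
      [e, 0, -1, -10, a, a, a],
      [-1, e, 0, -10, a, a, a],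
      [-2, -2, 2, 0, t, t, t],
      [t, t, t, 10, 0, -1, e],
      [t, t, t, 10, e, 0, -1],
      [t, t, t, 10, -1, e, 0]] ! (i - 1) ! (j - 1))"

end

theory Submission
  imports Defs
begin

text \<open>Within each of the blocks \<open>{1,2,3}\<close> and \<open>{5,6,7}\<close> the pure payoffs differ only by a
  perturbed rock-paper-scissors game: against the block part \<open>p\<close> of the opponent's strategy,
  strategy \<open>i\<close> earns \<open>-p(i+1) + \<epsilon> p(i+2)\<close> plus a term common to the block (indices mod 3).
  If \<open>p(i) = 0\<close> but \<open>p \<noteq> 0\<close>, then strategy \<open>i+1\<close> earns \<open>-p(i+2) \<le> 0 \<le> \<epsilon> p(i+1)\<close>, the payoff
  of \<open>i+2\<close>, with equality only if \<open>p = 0\<close>; so the other player avoids \<open>i+1\<close>. Alternating between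
  the players around the cycle, both block parts would vanish. Hence every block strategy is
  played, and the resulting indifference equations have only the uniform solution because
  \<open>1 + \<epsilon> + \<epsilon>\<^sup>2 \<noteq> 0\<close>. The argument works for every \<open>\<epsilon> > 0\<close>.\<close>

definition rps :: "real \<Rightarrow> real \<Rightarrow> real \<Rightarrow> real" where
  "rps e b c = -b + e * c"

definition rps_best_replies ::
    "real \<Rightarrow> real \<Rightarrow> real \<Rightarrow> real \<Rightarrow> real \<Rightarrow> real \<Rightarrow> real \<Rightarrow> bool" where
  "rps_best_replies e p1 p2 p3 r1 r2 r3 \<longleftrightarrow>
    (0 < r1 \<longrightarrow> rps e p3 p1 \<le> rps e p2 p3 \<and> rps e p1 p2 \<le> rps e p2 p3) \<and>
    (0 < r2 \<longrightarrow> rps e p2 p3 \<le> rps e p3 p1 \<and> rps e p1 p2 \<le> rps e p3 p1) \<and>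
    (0 < r3 \<longrightarrow> rps e p2 p3 \<le> rps e p1 p2 \<and> rps e p3 p1 \<le> rps e p1 p2)"

lemma rps_best_replies_rotate:
  "rps_best_replies e p1 p2 p3 r1 r2 r3 \<Longrightarrow> rps_best_replies e p2 p3 p1 r2 r3 r1"
  unfolding rps_best_replies_def by auto

lemma rps_best_replies_zero:
  assumes "rps_best_replies e p1 p2 p3 r1 r2 r3" "0 < e"
    and "0 \<le> p2" "0 \<le> p3" "0 < p1 + p2 + p3" "p1 = 0" "0 \<le> r2"
  shows "r2 = 0"
proof (rule ccontr)
  assume "r2 \<noteq> 0"
  with assms have "-p3 \<ge> e * p2"
    unfolding rps_best_replies_def rps_def by auto
  moreover have "0 \<le> e * p2" using assms by simp
  ultimately have "p3 = 0" "e * p2 = 0" using \<open>0 \<le> p3\<close> by linarith+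
  with assms show False by simp
qed

lemma rps_equilibrium_first_pos:
  assumes br: "rps_best_replies e p1 p2 p3 r1 r2 r3" "rps_best_replies e r1 r2 r3 p1 p2 p3"
    and "0 < e" "0 \<le> p1" "0 \<le> p2" "0 \<le> p3" "0 \<le> r1" "0 \<le> r2" "0 \<le> r3"
    and "0 < p1 + p2 + p3" "0 < r1 + r2 + r3"
  shows "0 < p1"
proof (rule ccontr)
  note zero = rps_best_replies_zero and rot = rps_best_replies_rotate
  assume "\<not> 0 < p1"
  then have "p1 = 0" using assms by simp
  then have "r2 = 0" by (rule zero[OF br(1) \<open>0 < e\<close>, rotated 3]) (use assms in linarith)+
  then have "p3 = 0" by (rule zero[OF rot[OF br(2)] \<open>0 < e\<close>, rotated 3]) (use assms in linarith)+
  then have "r1 = 0"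
    by (rule zero[OF rot[OF rot[OF br(1)]] \<open>0 < e\<close>, rotated 3]) (use assms in linarith)+
  then have "p2 = 0" by (rule zero[OF br(2) \<open>0 < e\<close>, rotated 3]) (use assms in linarith)+
  with \<open>p1 = 0\<close> \<open>p3 = 0\<close> \<open>0 < p1 + p2 + p3\<close> show False by simp
qed

lemma rps_indifferent_imp_uniform:
  assumes "0 < e" "rps e p2 p3 = rps e p3 p1" "rps e p3 p1 = rps e p1 p2"
  shows "p1 = p2 \<and> p2 = p3"
proof -
  have "(1 + e + e\<^sup>2) * (p1 - p3) =
      ((1 + e) * p1 - p3 - e * p2) - e * ((1 + e) * p3 - p2 - e * p1)"
    by (simp add: algebra_simps power2_eq_square)
  also have "\<dots> = 0" using assms(2,3) unfolding rps_def by (simp add: algebra_simps)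
  finally have "(1 + e + e\<^sup>2) * (p1 - p3) = 0" .
  moreover have "0 < 1 + e + e\<^sup>2" using \<open>0 < e\<close> by (simp add: add_pos_nonneg)
  ultimately have "p1 = p3" by simp
  with assms(2) show ?thesis unfolding rps_def by (simp add: algebra_simps)
qed

lemma rps_equilibrium_uniform:
  assumes br: "rps_best_replies e p1 p2 p3 r1 r2 r3" "rps_best_replies e r1 r2 r3 p1 p2 p3"
    and "0 < e" "0 \<le> p1" "0 \<le> p2" "0 \<le> p3" "0 \<le> r1" "0 \<le> r2" "0 \<le> r3"
    and "0 < p1 + p2 + p3" "0 < r1 + r2 + r3"
  shows "p1 = p2 \<and> p2 = p3 \<and> r1 = r2 \<and> r2 = r3"
proof -
  note pos = rps_equilibrium_first_pos and rot = rps_best_replies_rotate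
  have "0 < p1" by (rule pos[OF br]) (use assms in linarith)+
  have "0 < p2" by (rule pos[OF rot[OF br(1)] rot[OF br(2)]]) (use assms in linarith)+
  have "0 < p3"
    by (rule pos[OF rot[OF rot[OF br(1)]] rot[OF rot[OF br(2)]]]) (use assms in linarith)+
  have "0 < r1" by (rule pos[OF br(2,1)]) (use assms in linarith)+
  have "0 < r2" by (rule pos[OF rot[OF br(2)] rot[OF br(1)]]) (use assms in linarith)+
  have "0 < r3"
    by (rule pos[OF rot[OF rot[OF br(2)]] rot[OF rot[OF br(1)]]]) (use assms in linarith)+
  have "rps e p2 p3 = rps e p3 p1" "rps e p3 p1 = rps e p1 p2"
    using br(1) \<open>0 < r1\<close> \<open>0 < r2\<close> \<open>0 < r3\<close> unfolding rps_best_replies_def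
    by (auto intro: order.antisym)
  moreover have "rps e r2 r3 = rps e r3 r1" "rps e r3 r1 = rps e r1 r2"
    using br(2) \<open>0 < p1\<close> \<open>0 < p2\<close> \<open>0 < p3\<close> unfolding rps_best_replies_def
    by (auto intro: order.antisym)
  ultimately show ?thesis using rps_indifferent_imp_uniform[OF \<open>0 < e\<close>] by blast
qed

definition pure_payoff :: "(nat \<Rightarrow> nat \<Rightarrow> real) \<Rightarrow> (nat \<Rightarrow> real) \<Rightarrow> nat \<Rightarrow> real" where
  "pure_payoff U y i = (\<Sum>j=1..7. U i j * y j)"

lemma payoff_eq_sum_pure_payoff: "payoff U x y = (\<Sum>i=1..7. x i * pure_payoff U y i)"
  unfolding payoff_def pure_payoff_def by (simp add: sum_distrib_left mult.assoc)

lemma nash_eq_sym: "nash_eq U x y \<longleftrightarrow> nash_eq U y x"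
  unfolding nash_eq_def by blast

lemma nash_eq_support_best_reply:
  assumes "nash_eq U x y" "i \<in> {1..7}" "j \<in> {1..7}" "0 < x i"
  shows "pure_payoff U y j \<le> pure_payoff U y i"
proof (cases "i = j")
  case False
  define x' where "x' k = x k + (if k = j then x i else 0) - (if k = i then x i else 0)" for k
  have x: "(\<Sum>k=1..7. x k) = 1" "\<forall>k\<in>{1..7}. 0 \<le> x k"
    and opt: "\<forall>x'\<in>simplex7. payoff U x' y \<le> payoff U x y"
    using assms(1) by (auto simp: nash_eq_def simplex7_def)
  have "(\<Sum>k=1..7. x' k) = 1"
    using x assms(2,3) unfolding x'_def by (simp add: sum.distrib sum_subtractf)
  moreover have "\<forall>k\<in>{1..7}. 0 \<le> x' k" using x False \<open>0 < x i\<close> unfolding x'_def by auto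
  ultimately have "payoff U x' y \<le> payoff U x y" using opt by (simp add: simplex7_def)
  moreover have "payoff U x' y = (\<Sum>k=1..7. x k * pure_payoff U y k
      + (if k = j then x i * pure_payoff U y j else 0)
      - (if k = i then x i * pure_payoff U y i else 0))"
    unfolding payoff_eq_sum_pure_payoff x'_def by (rule sum.cong) (auto simp: algebra_simps)
  also have "\<dots> = payoff U x y + x i * pure_payoff U y j - x i * pure_payoff U y i"
    unfolding payoff_eq_sum_pure_payoff using assms(2,3) by (simp add: sum.distrib sum_subtractf)
  ultimately show ?thesis using \<open>0 < x i\<close> by simp
qed simp

lemma pure_payoff_Umat:
  "pure_payoff (Umat e) y 1 = rps e (y 2) (y 3) + ((-1/3 + e) * (y 5 + y 6 + y 7) - 10 * y 4)"
  "pure_payoff (Umat e) y 2 = rps e (y 3) (y 1) + ((-1/3 + e) * (y 5 + y 6 + y 7) - 10 * y 4)"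
  "pure_payoff (Umat e) y 3 = rps e (y 1) (y 2) + ((-1/3 + e) * (y 5 + y 6 + y 7) - 10 * y 4)"
  "pure_payoff (Umat e) y 5 = rps e (y 6) (y 7) + (10 * y 4 - 1/3 * (y 1 + y 2 + y 3))"
  "pure_payoff (Umat e) y 6 = rps e (y 7) (y 5) + (10 * y 4 - 1/3 * (y 1 + y 2 + y 3))"
  "pure_payoff (Umat e) y 7 = rps e (y 5) (y 6) + (10 * y 4 - 1/3 * (y 1 + y 2 + y 3))"
  unfolding pure_payoff_def rps_def
  by (simp_all add: Icc_eq_insert_lb_nat numeral_eq_Suc Umat_def Let_def algebra_simps)

lemma rps_best_replies_of_block:
  assumes "\<And>a b. a \<in> {i, j, k} \<Longrightarrow> b \<in> {i, j, k} \<Longrightarrow> 0 < x a \<Longrightarrow> f b \<le> f a"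
    and "f i = rps e (y j) (y k) + c" "f j = rps e (y k) (y i) + c" "f k = rps e (y i) (y j) + c"
  shows "rps_best_replies e (y i) (y j) (y k) (x i) (x j) (x k)"
  using assms(1)[of i j] assms(1)[of i k] assms(1)[of j i] assms(1)[of j k]
    assms(1)[of k i] assms(1)[of k j] assms(2-4)
  unfolding rps_best_replies_def by simp

lemma nash_eq_Umat_rps_best_replies:
  assumes "nash_eq (Umat e) x y"
  shows "rps_best_replies e (y 1) (y 2) (y 3) (x 1) (x 2) (x 3)"
    and "rps_best_replies e (y 5) (y 6) (y 7) (x 5) (x 6) (x 7)"
proof -
  note br = nash_eq_support_best_reply[OF assms]
  show "rps_best_replies e (y 1) (y 2) (y 3) (x 1) (x 2) (x 3)"
    by (rule rps_best_replies_of_block[where i = 1 and j = 2 and k = 3, OF _ pure_payoff_Umat(1-3)])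
      (rule br; auto)
  show "rps_best_replies e (y 5) (y 6) (y 7) (x 5) (x 6) (x 7)"
    by (rule rps_best_replies_of_block[where i = 5 and j = 6 and k = 7, OF _ pure_payoff_Umat(4-6)])
      (rule br; auto)
qed

theorem lemma5:
  "\<exists>e0>0. \<forall>e. 0 < e \<and> e < e0 \<longrightarrow>
     (\<forall>x y. nash_eq (Umat e) x y \<longrightarrow>
        ((x 1 + x 2 + x 3 > 0 \<and> y 1 + y 2 + y 3 > 0 \<longrightarrow>
            x 1 = x 2 \<and> x 2 = x 3 \<and> y 1 = y 2 \<and> y 2 = y 3) \<and>
         (x 5 + x 6 + x 7 > 0 \<and> y 5 + y 6 + y 7 > 0 \<longrightarrow>
            x 5 = x 6 \<and> x 6 = x 7 \<and> y 5 = y 6 \<and> y 6 = y 7)))"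
proof -
  have "(x 1 + x 2 + x 3 > 0 \<and> y 1 + y 2 + y 3 > 0 \<longrightarrow>
          x 1 = x 2 \<and> x 2 = x 3 \<and> y 1 = y 2 \<and> y 2 = y 3) \<and>
        (x 5 + x 6 + x 7 > 0 \<and> y 5 + y 6 + y 7 > 0 \<longrightarrow>
          x 5 = x 6 \<and> x 6 = x 7 \<and> y 5 = y 6 \<and> y 6 = y 7)"
    if "0 < e" and eq: "nash_eq (Umat e) x y" for e :: real and x y
  proof -
    have nonneg: "0 \<le> x k" "0 \<le> y k" if "k \<in> {1..7}" for k
      using eq that by (auto simp: nash_eq_def simplex7_def)
    note br_xy = nash_eq_Umat_rps_best_replies[OF eq]
    note br_yx = nash_eq_Umat_rps_best_replies[OF nash_eq_sym[THEN iffD1, OF eq]]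
    show ?thesis
      using rps_equilibrium_uniform[OF br_yx(1) br_xy(1) \<open>0 < e\<close>]
        rps_equilibrium_uniform[OF br_yx(2) br_xy(2) \<open>0 < e\<close>]
      by (simp add: nonneg)
  qed
  then show ?thesis by (intro exI[of _ 1]) auto
qed

end
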